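(* Let $n\ge1$ and consider the SBCM with parameters $\gamma\ge0$, $\delta\ge0$ on the path graph $P_n$ with nodes $1,2,\ldots,n+2$ (edges $\{k,k+1\}$), where nodes $1$ and $n+2$ are zealots with opinions $-(n+1)/2$ and $(n+1)/2$ respectively, and nodes $2,\ldots,n+1$ are persuadable. Let $\bar{\mathbf{x}}$ be the harmonic state $\bar x_k=k-\frac{n+3}{2}$ (so adjacent nodes have opinions differing by exactly $1$), which is a steady state for every $\gamma$. Let $v=\omega(1)=\frac{1}{1+e^{\gamma-\gamma\delta}}$ and $g(\gamma)=2\gamma(1-v)-1$. Then $\bar{\mathbf{x}}$ is linearly stable if and only if $g(\gamma)<0$, and is linearly unstable if and only if $g(\gamma)>0$.
   Context: The SBCM on a graph with zealots $\mathcal{Z}$ and persuadable nodes $\mathcal{P}$: with $w(x_i,x_j)=\omega(|x_i-x_j|)=\frac{1}{1+e^{\gamma(x_i-x_j)^2-\gamma\delta}}$ for adjacent $i\sim j$ and $0$ otherwise, the dynamics are $\frac{dx_i}{dt}=f_i(\mathbf{x})=\frac{\sum_j w(x_i,x_j)(x_j-x_i)}{\sum_j w(x_i,x_j)}$ for $i\in\mathcal{P}$ and $\frac{dx_i}{dt}=0$ for zealots. A steady state is linearly stable if all eigenvalues of $\mathbf{J}_{\mathcal{P}}=(\partial f_i/\partial x_j)_{i,j\in\mathcal{P}}$ at it are strictly negative, and linearly unstable if $\mathbf{J}_{\mathcal{P}}$ has a strictly positive eigenvalue. *)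

theory Defs
  imports Complex_Main "HOL-Analysis.Derivative" "Jordan_Normal_Form.Char_Poly"
begin

definition omega :: "real \<Rightarrow> real \<Rightarrow> real \<Rightarrow> real" where
  "omega \<gamma> \<delta> d = 1 / (1 + exp (\<gamma> * d^2 - \<gamma> * \<delta>))"

definition sbcm_w :: "(nat \<Rightarrow> nat \<Rightarrow> bool) \<Rightarrow> real \<Rightarrow> real \<Rightarrow> (nat \<Rightarrow> real) \<Rightarrow> nat \<Rightarrow> nat \<Rightarrow> real" where
  "sbcm_w adj \<gamma> \<delta> x i j = (if adj i j then omega \<gamma> \<delta> \<bar>x i - x j\<bar> else 0)"

definition sbcm_f :: "nat set \<Rightarrow> (nat \<Rightarrow> nat \<Rightarrow> bool) \<Rightarrow> real \<Rightarrow> real \<Rightarrow> (nat \<Rightarrow> real) \<Rightarrow> nat \<Rightarrow> real" where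
  "sbcm_f V adj \<gamma> \<delta> x i =
     (\<Sum>j\<in>V. sbcm_w adj \<gamma> \<delta> x i j * (x j - x i)) / (\<Sum>j\<in>V. sbcm_w adj \<gamma> \<delta> x i j)"

definition path_nodes :: "nat \<Rightarrow> nat set" where
  "path_nodes n = {1..n+2}"

definition path_adj :: "nat \<Rightarrow> nat \<Rightarrow> nat \<Rightarrow> bool" where
  "path_adj n i j = (i \<in> path_nodes n \<and> j \<in> path_nodes n \<and> (j = i + 1 \<or> i = j + 1))"

definition harmonic :: "nat \<Rightarrow> nat \<Rightarrow> real" where
  "harmonic n k = real k - (real n + 3) / 2"

text \<open>Row/column index a (0-based) corresponds to node a+2; entry (a,b) is the partial
  derivative of f_{a+2} with respect to x_{b+2}.\<close>
definition path_jacobian :: "nat \<Rightarrow> real \<Rightarrow> real \<Rightarrow> (nat \<Rightarrow> real) \<Rightarrow> real mat" where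
  "path_jacobian n \<gamma> \<delta> x = mat n n (\<lambda>(a, b).
      deriv (\<lambda>t. sbcm_f (path_nodes n) (path_adj n) \<gamma> \<delta> (x((b+2) := t)) (a+2)) (x (b+2)))"

definition lin_stable :: "real mat \<Rightarrow> bool" where
  "lin_stable J = (\<forall>\<mu>. eigenvalue (map_mat complex_of_real J) \<mu> \<longrightarrow> \<mu> \<in> \<real> \<and> Re \<mu> < 0)"

definition lin_unstable :: "real mat \<Rightarrow> bool" where
  "lin_unstable J = (\<exists>\<mu>. eigenvalue (map_mat complex_of_real J) \<mu> \<and> \<mu> \<in> \<real> \<and> Re \<mu> > 0)"

end

theory Submission
  imports Defs "Jordan_Normal_Form.Spectral_Radius"
begin

(* At the harmonic state every edge carries the same opinion gap 1, so the numerator of each f_i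
   vanishes and its derivative is v g times the discrete Laplacian stencil (2, -1, -1), while the
   denominator equals 2 v.  Hence the Jacobian is g/2 times the Dirichlet Laplacian L of the path,
   whose Hermitian form is a sum of squared jumps of the vector extended by zero at both ends and
   so is positive definite.  Every eigenvalue of J is therefore g/2 times a positive real, and
   there is at least one. *)

lemma omega_pos: "omega \<gamma> \<delta> d > 0"
  unfolding omega_def by (simp add: add_pos_pos)

lemma omega_abs: "omega \<gamma> \<delta> \<bar>d\<bar> = omega \<gamma> \<delta> d"
  unfolding omega_def by simp

lemma has_real_derivative_omega:
  "(omega \<gamma> \<delta> has_real_derivative - 2 * \<gamma> * d * omega \<gamma> \<delta> d * (1 - omega \<gamma> \<delta> d)) (at d)"
proof -
  define e where "e = exp (\<gamma> * d^2 - \<gamma> * \<delta>)"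
  have e: "1 + e > 0"
    unfolding e_def by (simp add: add_pos_pos)
  have "(omega \<gamma> \<delta> has_real_derivative - (e * (2 * \<gamma> * d)) / (1 + e)^2) (at d)"
    unfolding omega_def[abs_def] e_def
    apply (rule derivative_eq_intros refl | simp)+
    using e unfolding e_def by (simp_all add: power2_eq_square)
  also have "- (e * (2 * \<gamma> * d)) / (1 + e)^2 = - 2 * \<gamma> * d * omega \<gamma> \<delta> d * (1 - omega \<gamma> \<delta> d)"
    using e unfolding omega_def e_def[symmetric] by (simp add: field_simps power2_eq_square)
  finally show ?thesis .
qed

lemma has_real_derivative_mult_omega_unit:
  assumes "\<bar>d\<bar> = 1"
  shows "((\<lambda>d. d * omega \<gamma> \<delta> d) has_real_derivative
           - omega \<gamma> \<delta> 1 * (2 * \<gamma> * (1 - omega \<gamma> \<delta> 1) - 1)) (at d)"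
proof -
  have omega_d: "omega \<gamma> \<delta> d = omega \<gamma> \<delta> 1"
    by (metis assms omega_abs)
  have d_square: "d * d = 1"
    by (metis assms abs_mult_self_eq mult_1_left)
  have "1 * omega \<gamma> \<delta> d + - 2 * \<gamma> * d * omega \<gamma> \<delta> d * (1 - omega \<gamma> \<delta> d) * d
      = omega \<gamma> \<delta> d - 2 * \<gamma> * omega \<gamma> \<delta> d * (1 - omega \<gamma> \<delta> d) * (d * d)"
    by (simp add: algebra_simps)
  also have "\<dots> = - omega \<gamma> \<delta> 1 * (2 * \<gamma> * (1 - omega \<gamma> \<delta> 1) - 1)"
    unfolding omega_d d_square by (simp add: algebra_simps)
  finally show ?thesis
    using DERIV_mult[OF DERIV_ident has_real_derivative_omega[of \<gamma> \<delta> d]] by simp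
qed

lemma sbcm_f_path_interior:
  assumes "2 \<le> i" "i \<le> n + 1"
  shows "sbcm_f (path_nodes n) (path_adj n) \<gamma> \<delta> x i =
    - ((x i - x (i - 1)) * omega \<gamma> \<delta> (x i - x (i - 1)) + (x i - x (i + 1)) * omega \<gamma> \<delta> (x i - x (i + 1)))
    / (omega \<gamma> \<delta> (x i - x (i - 1)) + omega \<gamma> \<delta> (x i - x (i + 1)))"
proof -
  have neighbours: "{i - 1, i + 1} \<subseteq> path_nodes n" "path_adj n i (i - 1)" "path_adj n i (i + 1)"
    using assms by (auto simp: path_nodes_def path_adj_def)
  have only_neighbours: "(\<Sum>j\<in>path_nodes n. sbcm_w (path_adj n) \<gamma> \<delta> x i j * F j) =
      (\<Sum>j\<in>{i - 1, i + 1}. sbcm_w (path_adj n) \<gamma> \<delta> x i j * F j)" for F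
    by (rule sum.mono_neutral_right)
      (use neighbours in \<open>auto simp: path_nodes_def sbcm_w_def path_adj_def\<close>)
  show ?thesis
    unfolding sbcm_f_def only_neighbours[of "\<lambda>j. x j - x i"] only_neighbours[of "\<lambda>_. 1", simplified]
    using neighbours by (simp add: sbcm_w_def omega_abs algebra_simps)
qed

lemma has_real_derivative_fun_upd:
  "((\<lambda>t. (x(j := t)) k) has_real_derivative of_bool (k = j)) (at s)"
  by (cases "k = j") simp_all

lemma deriv_divide_numerator_zero:
  assumes "(N has_real_derivative N') (at t)" "(D has_real_derivative D') (at t)"
    and "N t = 0" "D t \<noteq> 0"
  shows "deriv (\<lambda>t. N t / D t) t = N' / D t"
  using DERIV_imp_deriv[OF DERIV_divide[OF assms(1,2,4)]] assms(3,4)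
  by (simp add: power2_eq_square)

lemma deriv_sbcm_f_path_harmonic:
  assumes "2 \<le> i" "i \<le> n + 1"
  shows "deriv (\<lambda>t. sbcm_f (path_nodes n) (path_adj n) \<gamma> \<delta> ((harmonic n)(j := t)) i) (harmonic n j) =
    (2 * \<gamma> * (1 - omega \<gamma> \<delta> 1) - 1) / 2 * (2 * of_bool (i = j) - of_bool (i - 1 = j) - of_bool (i + 1 = j))"
proof -
  define v where "v = omega \<gamma> \<delta> 1"
  define g where "g = 2 * \<gamma> * (1 - v) - 1"
  define h where "h = harmonic n"
  define y where "y t = h(j := t)" for t
  define N where "N t = - ((y t i - y t (i - 1)) * omega \<gamma> \<delta> (y t i - y t (i - 1))
                         + (y t i - y t (i + 1)) * omega \<gamma> \<delta> (y t i - y t (i + 1)))" for t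
  define D where "D t = omega \<gamma> \<delta> (y t i - y t (i - 1)) + omega \<gamma> \<delta> (y t i - y t (i + 1))" for t
  have unit_steps: "h i - h (i - 1) = 1" "h i - h (i + 1) = - 1"
    using assms by (simp_all add: h_def harmonic_def)
  have gap: "((\<lambda>t. (y t i - y t k) * omega \<gamma> \<delta> (y t i - y t k)) has_real_derivative
      - (v * g) * (of_bool (i = j) - of_bool (k = j))) (at (h j))"
    if "\<bar>h i - h k\<bar> = 1" for k
  proof -
    have "\<bar>(h(j := h j)) i - (h(j := h j)) k\<bar> = 1"
      using that by simp
    from DERIV_chain2[OF has_real_derivative_mult_omega_unit[OF this, where \<gamma> = \<gamma> and \<delta> = \<delta>]
        DERIV_diff[OF has_real_derivative_fun_upd[of h j i "h j"] has_real_derivative_fun_upd[of h j k "h j"]]]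
    show ?thesis
      by (simp add: y_def v_def g_def)
  qed
  have weight: "\<exists>W. ((\<lambda>t. omega \<gamma> \<delta> (y t i - y t k)) has_real_derivative W) (at (h j))" for k
    using DERIV_chain2[OF has_real_derivative_omega
        DERIV_diff[OF has_real_derivative_fun_upd[of h j i "h j"] has_real_derivative_fun_upd[of h j k "h j"]]]
    unfolding y_def by blast
  have "(N has_real_derivative v * g * (2 * of_bool (i = j) - of_bool (i - 1 = j) - of_bool (i + 1 = j))) (at (h j))"
    unfolding N_def[abs_def]
    using DERIV_minus[OF DERIV_add[OF gap[of "i - 1"] gap[of "i + 1"]]] unit_steps
    by (simp add: algebra_simps)
  moreover obtain D' where "(D has_real_derivative D') (at (h j))"
    unfolding D_def[abs_def] using weight DERIV_add by blast
  moreover have "N (h j) = 0" "D (h j) = 2 * v"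
    using unit_steps omega_abs[of \<gamma> \<delta> "-1"] by (simp_all add: N_def D_def y_def v_def)
  moreover have "v > 0"
    by (simp add: v_def omega_pos)
  moreover have "(\<lambda>t. sbcm_f (path_nodes n) (path_adj n) \<gamma> \<delta> (y t) i) = (\<lambda>t. N t / D t)"
    using assms by (simp add: sbcm_f_path_interior N_def D_def)
  ultimately show ?thesis
    using deriv_divide_numerator_zero by (simp add: y_def h_def g_def v_def)
qed

definition path_dirichlet_laplacian :: "nat \<Rightarrow> real mat" where
  "path_dirichlet_laplacian n =
     mat n n (\<lambda>(i, j). 2 * of_bool (i = j) - of_bool (i = j + 1) - of_bool (j = i + 1))"

lemma path_dirichlet_laplacian_carrier: "path_dirichlet_laplacian n \<in> carrier_mat n n"
  by (simp add: path_dirichlet_laplacian_def)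

lemma path_jacobian_harmonic:
  "path_jacobian n \<gamma> \<delta> (harmonic n) =
     ((2 * \<gamma> * (1 - omega \<gamma> \<delta> 1) - 1) / 2) \<cdot>\<^sub>m path_dirichlet_laplacian n"
    (is "_ = ?J")
proof (rule eq_matI)
  fix a b
  assume "a < dim_row ?J" "b < dim_col ?J"
  then have "a < n" "b < n"
    by (simp_all add: path_dirichlet_laplacian_def)
  with deriv_sbcm_f_path_harmonic[of "a + 2" n \<gamma> \<delta> "b + 2"]
  show "path_jacobian n \<gamma> \<delta> (harmonic n) $$ (a, b) = ?J $$ (a, b)"
    by (simp add: path_jacobian_def path_dirichlet_laplacian_def)
qed (simp_all add: path_jacobian_def path_dirichlet_laplacian_def)

(* Sum of the squared jumps of w 0, ..., w m extended by zero at both ends. *)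
definition path_dirichlet_energy :: "(nat \<Rightarrow> complex) \<Rightarrow> nat \<Rightarrow> real" where
  "path_dirichlet_energy w m = cmod (w 0)^2 + cmod (w m)^2 + (\<Sum>i<m. cmod (w (Suc i) - w i)^2)"

lemma path_dirichlet_laplacian_form:
  fixes w :: "nat \<Rightarrow> complex"
  shows "(\<Sum>i<Suc m. \<Sum>j<Suc m.
            cnj (w i) * (2 * of_bool (i = j) - of_bool (i = j + 1) - of_bool (j = i + 1)) * w j)
         = of_real (path_dirichlet_energy w m)"
proof (induction m)
  case 0
  show ?case
    using complex_norm_square[of "w 0"] by (simp add: path_dirichlet_energy_def mult.commute)
next
  case (Suc m)
  define f where "f i j = cnj (w i) * (2 * of_bool (i = j) - of_bool (i = j + 1) - of_bool (j = i + 1)) * w j"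
    for i j
  have "(\<Sum>i<Suc (Suc m). \<Sum>j<Suc (Suc m). f i j) =
     (\<Sum>i<Suc m. \<Sum>j<Suc m. f i j) + (\<Sum>i<Suc m. f i (Suc m)) + (\<Sum>j<Suc m. f (Suc m) j) + f (Suc m) (Suc m)"
    by (simp only: sum.lessThan_Suc[where n = "Suc m"] sum.distrib ac_simps)
  also have "\<dots> = (\<Sum>i<Suc m. \<Sum>j<Suc m. f i j)
      + 2 * cnj (w (Suc m)) * w (Suc m) - cnj (w m) * w (Suc m) - cnj (w (Suc m)) * w m"
    by (simp add: f_def)
  also have "\<dots> = of_real (path_dirichlet_energy w (Suc m))"
    unfolding Suc.IH[folded f_def] path_dirichlet_energy_def of_real_add of_real_sum complex_norm_square
    by (simp add: algebra_simps)
  finally show ?case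
    unfolding f_def .
qed

lemma path_dirichlet_energy_pos:
  assumes "k \<le> m" "w k \<noteq> 0"
  shows "path_dirichlet_energy w m > 0"
proof (rule ccontr)
  assume "\<not> ?thesis"
  moreover have "0 \<le> (\<Sum>i<m. cmod (w (Suc i) - w i)^2)"
    by (simp add: sum_nonneg)
  ultimately have "cmod (w 0)^2 = 0" "(\<Sum>i<m. cmod (w (Suc i) - w i)^2) = 0"
    unfolding path_dirichlet_energy_def by (smt (verit) zero_le_power2)+
  then have "w 0 = 0" and "\<And>i. i < m \<Longrightarrow> w (Suc i) = w i"
    by (simp_all add: sum_nonneg_eq_0_iff)
  then have "w i = 0" if "i \<le> m" for i
    using that by (induction i) auto
  with assms show False
    by blast
qed

(* On complex numbers z > 0 refers to the partial order of Complex_Order: z is a positive real. *)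
lemma path_dirichlet_laplacian_positive_definite:
  assumes v: "v \<in> carrier_vec n" "v \<noteq> 0\<^sub>v n"
  shows "(map_mat complex_of_real (path_dirichlet_laplacian n) *\<^sub>v v) \<bullet>c v > 0"
proof -
  obtain k where k: "k < n" "v $ k \<noteq> 0"
    using v by (metis carrier_vecD eq_vecI index_zero_vec)
  then obtain m where n: "n = Suc m"
    by (cases n) auto
  have "(map_mat complex_of_real (path_dirichlet_laplacian n) *\<^sub>v v) \<bullet>c v =
    (\<Sum>i<n. \<Sum>j<n. cnj (v $ i) * (2 * of_bool (i = j) - of_bool (i = j + 1) - of_bool (j = i + 1)) * v $ j)"
    using v(1)
    by (auto simp: path_dirichlet_laplacian_def scalar_prod_def row_def sum_distrib_left lessThan_atLeast0 ac_simps
             intro!: sum.cong)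
  also have "\<dots> = of_real (path_dirichlet_energy (($) v) m)"
    unfolding n by (rule path_dirichlet_laplacian_form)
  also have "\<dots> > 0"
    using path_dirichlet_energy_pos[of k m "($) v"] k n by (simp add: less_complex_def)
  finally show ?thesis .
qed

lemma complex_gt_zero_is_pos_real: "(z :: complex) > 0 \<Longrightarrow> \<exists>r>0. z = of_real r"
  by (auto simp: less_complex_def complex_eq_iff intro: exI[of _ "Re z"])

lemma eigenvalue_smult_positive_definite:
  fixes A :: "real mat"
  assumes A: "A \<in> carrier_mat n n"
    and pos: "\<And>v. v \<in> carrier_vec n \<Longrightarrow> v \<noteq> 0\<^sub>v n \<Longrightarrow> (map_mat complex_of_real A *\<^sub>v v) \<bullet>c v > 0"
    and ev: "eigenvalue (map_mat complex_of_real (c \<cdot>\<^sub>m A)) \<mu>"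
  shows "\<exists>r>0. \<mu> = complex_of_real (c * r)"
proof -
  let ?B = "map_mat complex_of_real A"
  obtain v where v: "v \<in> carrier_vec n" "v \<noteq> 0\<^sub>v n"
    and eig: "map_mat complex_of_real (c \<cdot>\<^sub>m A) *\<^sub>v v = \<mu> \<cdot>\<^sub>v v"
    using ev A unfolding eigenvalue_def eigenvector_def by auto
  have "map_mat complex_of_real (c \<cdot>\<^sub>m A) *\<^sub>v v = of_real c \<cdot>\<^sub>v (?B *\<^sub>v v)"
    using A v by (auto intro!: eq_vecI simp: scalar_prod_def row_def sum_distrib_left ac_simps)
  then have "of_real c * ((?B *\<^sub>v v) \<bullet>c v) = \<mu> * (v \<bullet>c v)"
    using eig A v
    by (metis carrier_vecD dim_vec_conjugate map_carrier_mat mult_mat_vec_carrier scalar_prod_smult_left)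
  moreover obtain q where q: "(?B *\<^sub>v v) \<bullet>c v = of_real q" "q > 0"
    using complex_gt_zero_is_pos_real[OF pos[OF v]] by blast
  moreover obtain s where s: "v \<bullet>c v = of_real s" "s > 0"
    using complex_gt_zero_is_pos_real conjugate_square_greater_0_vec[OF v(1)] v(2) by blast
  ultimately have "\<mu> = of_real (c * (q / s))"
    by (simp add: field_simps)
  with q s show ?thesis
    by (metis divide_pos_pos)
qed

lemma lin_stable_unstable_iff_sign:
  assumes "A \<in> carrier_mat n n" "n > 0"
    and eigenvalues: "\<And>\<mu>. eigenvalue (map_mat complex_of_real A) \<mu> \<Longrightarrow> \<exists>r>0. \<mu> = complex_of_real (c * r)"
  shows "(lin_stable A \<longleftrightarrow> c < 0) \<and> (lin_unstable A \<longleftrightarrow> c > 0)"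
proof -
  have sign: "\<mu> \<in> \<real> \<and> (Re \<mu> < 0 \<longleftrightarrow> c < 0) \<and> (Re \<mu> > 0 \<longleftrightarrow> c > 0)"
    if "eigenvalue (map_mat complex_of_real A) \<mu>" for \<mu>
    using eigenvalues[OF that] by (auto simp del: of_real_mult simp: mult_less_0_iff zero_less_mult_iff)
  obtain \<mu>\<^sub>0 where "eigenvalue (map_mat complex_of_real A) \<mu>\<^sub>0"
    using spectrum_non_empty[of "map_mat complex_of_real A" n] assms(1,2) unfolding spectrum_def by auto
  with sign show ?thesis
    unfolding lin_stable_def lin_unstable_def by blast
qed

theorem lemma3:
  fixes n :: nat and \<gamma> \<delta> :: real
  assumes "n \<ge> 1" and "\<gamma> \<ge> 0" and "\<delta> \<ge> 0"
  defines "v \<equiv> omega \<gamma> \<delta> 1"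
  defines "g \<equiv> 2 * \<gamma> * (1 - v) - 1"
  shows "(lin_stable (path_jacobian n \<gamma> \<delta> (harmonic n)) \<longleftrightarrow> g < 0) \<and>
         (lin_unstable (path_jacobian n \<gamma> \<delta> (harmonic n)) \<longleftrightarrow> g > 0)"
proof -
  have J: "path_jacobian n \<gamma> \<delta> (harmonic n) = (g / 2) \<cdot>\<^sub>m path_dirichlet_laplacian n"
    unfolding g_def v_def by (rule path_jacobian_harmonic)
  have "(lin_stable (path_jacobian n \<gamma> \<delta> (harmonic n)) \<longleftrightarrow> g / 2 < 0) \<and>
        (lin_unstable (path_jacobian n \<gamma> \<delta> (harmonic n)) \<longleftrightarrow> g / 2 > 0)"
    unfolding J using assms(1)
    by (intro lin_stable_unstable_iff_sign[where n = n] smult_carrier_mat path_dirichlet_laplacian_carrier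
          eigenvalue_smult_positive_definite[OF path_dirichlet_laplacian_carrier
            path_dirichlet_laplacian_positive_definite]) auto
  then show ?thesis
    by simp
qed

end
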